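(* In the calculus $\lambda^{RE}$ described in the context: if $e_1\to^*e_1'$ and $e_2\to^*e_2'$, then $\delta\vdash e_1'\approx e_2':\tau$ if and only if $\delta\vdash e_1\approx e_2:\tau$.
   Context: Syntax of $\lambda^{RE}$. Basic types $b ::= \mathsf{Bool}\mid\mathsf{Unit}$. Constants $c ::= \mathsf{true}\mid\mathsf{false}\mid\mathsf{unit}\mid (=_b)\mid (=_{(c,b)})$. Expressions $e ::= c\mid x\mid e\ e\mid \lambda x{:}\tau.\,e\mid \mathsf{BEq}_b\ e\ e\ e\mid \mathsf{XEq}_{x:\tau\to\tau}\ e\ e\ e$. Values $v ::= c\mid \lambda x{:}\tau.\,e\mid \mathsf{BEq}_b\ e\ e\ v\mid \mathsf{XEq}_{x:\tau\to\tau}\ e\ e\ v$. Types $\tau ::= \{x{:}b\mid e\}\mid x{:}\tau\to\tau\mid \mathsf{PEq}_{\tau}\{e\}\{e\}$. $e[x:=e']$ is capture-avoiding substitution. Reduction: evaluation contexts $E ::= \bullet\mid E\ e\mid v\ E\mid \mathsf{BEq}_b\ e\ e\ E\mid\mathsf{XEq}_{x:\tau\to\tau}\ e\ e\ E$; $E[e]\to E[e']$ if $e\to e'$; $(\lambda x{:}\tau.\,e)\ v\to e[x:=v]$; $(=_b)\ c_1\to(=_{(c_1,b)})$; $(=_{(c_1,b)})\ c_2\to\mathsf{true}$ if $c_1,c_2$ syntactically equal, else $\to\mathsf{false}$. $\to^*$ is the reflexive–transitive closure. Equivalence logical relation. A pending substitution $\delta$ maps variables to pairs of closed values; $\delta_1,\delta_2$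 are its component substitutions, and $\delta,(v_1,v_2)/x$ extends it. Value relation $\delta\vdash v_1\approx_{val}v_2:\tau$: for $\{x{:}b\mid r\}$: $v_1=v_2=c$ with $c$ a constant of simple type $b$, $\delta_1(r[x:=c])\to^*\mathsf{true}$ and $\delta_2(r[x:=c])\to^*\mathsf{true}$; for $x{:}\tau_x\to\tau$: for all $v_3,v_4$ with $\delta\vdash v_3\approx_{val}v_4:\tau_x$, $\delta,(v_3,v_4)/x\vdash v_1\ v_3\approx v_2\ v_4:\tau$; for $\mathsf{PEq}_\tau\{e_l\}\{e_r\}$: $\delta\vdash\delta_1(e_l)\approx\delta_2(e_r):\tau$. Expression relation: $\delta\vdash e_1\approx e_2:\tau$ iff $e_1\to^*v_1$, $e_2\to^*v_2$ for some values and $\delta\vdash v_1\approx_{val}v_2:\tau$. *)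

theory Defs
  imports Main
begin

type_synonym var = nat

datatype bty = TBool | TUnit

text \<open>Constants: true, false, unit, (=_b), (=_(c,b)).\<close>
datatype const = CTrue | CFalse | CUnit | CEq bty | CEq1 const bty

datatype expr =
    Const const
  | Var var
  | App expr expr
  | Lam var ty expr
  | BEq bty expr expr expr
  | XEq var ty ty expr expr expr        \<comment> \<open>XEq_{x:\<tau>\<rightarrow>\<tau>'} e e e  (x bound in \<tau>')\<close>
and ty =
    TRef var bty expr                   \<comment> \<open>{x:b | e}  (x bound in e)\<close>
  | TArr var ty ty                      \<comment> \<open>x:\<tau>x \<rightarrow> \<tau>  (x bound in \<tau>)\<close>
  | TPEq ty expr expr

inductive is_value :: "expr \<Rightarrow> bool" where
  "is_value (Const c)"
| "is_value (Lam x t e)"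
| "is_value v \<Longrightarrow> is_value (BEq b e1 e2 v)"
| "is_value v \<Longrightarrow> is_value (XEq x t1 t2 e1 e2 v)"

fun fv_e :: "expr \<Rightarrow> var set" and fv_t :: "ty \<Rightarrow> var set" where
  "fv_e (Const c) = {}"
| "fv_e (Var x) = {x}"
| "fv_e (App e1 e2) = fv_e e1 \<union> fv_e e2"
| "fv_e (Lam x t e) = fv_t t \<union> (fv_e e - {x})"
| "fv_e (BEq b e1 e2 e3) = fv_e e1 \<union> fv_e e2 \<union> fv_e e3"
| "fv_e (XEq x t1 t2 e1 e2 e3) = fv_t t1 \<union> (fv_t t2 - {x}) \<union> fv_e e1 \<union> fv_e e2 \<union> fv_e e3"
| "fv_t (TRef x b e) = fv_e e - {x}"
| "fv_t (TArr x t1 t2) = fv_t t1 \<union> (fv_t t2 - {x})"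
| "fv_t (TPEq t e1 e2) = fv_t t \<union> fv_e e1 \<union> fv_e e2"

definition closed :: "expr \<Rightarrow> bool" where
  "closed e \<longleftrightarrow> fv_e e = {}"

definition swap_v :: "var \<Rightarrow> var \<Rightarrow> var \<Rightarrow> var" where
  "swap_v a b z = (if z = a then b else if z = b then a else z)"

fun swap_e :: "var \<Rightarrow> var \<Rightarrow> expr \<Rightarrow> expr" and swap_t :: "var \<Rightarrow> var \<Rightarrow> ty \<Rightarrow> ty" where
  "swap_e a b (Const c) = Const c"
| "swap_e a b (Var x) = Var (swap_v a b x)"
| "swap_e a b (App e1 e2) = App (swap_e a b e1) (swap_e a b e2)"
| "swap_e a b (Lam x t e) = Lam (swap_v a b x) (swap_t a b t) (swap_e a b e)"
| "swap_e a b (BEq bt e1 e2 e3) = BEq bt (swap_e a b e1) (swap_e a b e2) (swap_e a b e3)"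
| "swap_e a b (XEq x t1 t2 e1 e2 e3) =
     XEq (swap_v a b x) (swap_t a b t1) (swap_t a b t2) (swap_e a b e1) (swap_e a b e2) (swap_e a b e3)"
| "swap_t a b (TRef x bt e) = TRef (swap_v a b x) bt (swap_e a b e)"
| "swap_t a b (TArr x t1 t2) = TArr (swap_v a b x) (swap_t a b t1) (swap_t a b t2)"
| "swap_t a b (TPEq t e1 e2) = TPEq (swap_t a b t) (swap_e a b e1) (swap_e a b e2)"

fun sz_e :: "expr \<Rightarrow> nat" and sz_t :: "ty \<Rightarrow> nat" where
  "sz_e (Const c) = 1"
| "sz_e (Var x) = 1"
| "sz_e (App e1 e2) = Suc (sz_e e1 + sz_e e2)"
| "sz_e (Lam x t e) = Suc (sz_t t + sz_e e)"
| "sz_e (BEq b e1 e2 e3) = Suc (sz_e e1 + sz_e e2 + sz_e e3)"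
| "sz_e (XEq x t1 t2 e1 e2 e3) = Suc (sz_t t1 + sz_t t2 + sz_e e1 + sz_e e2 + sz_e e3)"
| "sz_t (TRef x b e) = Suc (sz_e e)"
| "sz_t (TArr x t1 t2) = Suc (sz_t t1 + sz_t t2)"
| "sz_t (TPEq t e1 e2) = Suc (sz_t t + sz_e e1 + sz_e e2)"

lemma sz_swap: "sz_e (swap_e a b e) = sz_e e" "sz_t (swap_t a b t) = sz_t t"
  by (induction e and t) auto

definition fresh :: "var set \<Rightarrow> var" where
  "fresh S = Suc (Max (insert 0 S))"

function subst_e :: "var \<Rightarrow> expr \<Rightarrow> expr \<Rightarrow> expr" and subst_t :: "var \<Rightarrow> expr \<Rightarrow> ty \<Rightarrow> ty" where
  "subst_e x s (Const c) = Const c"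
| "subst_e x s (Var y) = (if y = x then s else Var y)"
| "subst_e x s (App e1 e2) = App (subst_e x s e1) (subst_e x s e2)"
| "subst_e x s (Lam y t e) =
     (if y = x then Lam y (subst_t x s t) e
      else if y \<in> fv_e s then
        (let z = fresh (fv_e s \<union> fv_e e \<union> {x, y}) in Lam z (subst_t x s t) (subst_e x s (swap_e y z e)))
      else Lam y (subst_t x s t) (subst_e x s e))"
| "subst_e x s (BEq b e1 e2 e3) = BEq b (subst_e x s e1) (subst_e x s e2) (subst_e x s e3)"
| "subst_e x s (XEq y t1 t2 e1 e2 e3) =
     (if y = x then XEq y (subst_t x s t1) t2 (subst_e x s e1) (subst_e x s e2) (subst_e x s e3)
      else if y \<in> fv_e s then
        (let z = fresh (fv_e s \<union> fv_t t2 \<union> {x, y}) in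
          XEq z (subst_t x s t1) (subst_t x s (swap_t y z t2)) (subst_e x s e1) (subst_e x s e2) (subst_e x s e3))
      else XEq y (subst_t x s t1) (subst_t x s t2) (subst_e x s e1) (subst_e x s e2) (subst_e x s e3))"
| "subst_t x s (TRef y b e) =
     (if y = x then TRef y b e
      else if y \<in> fv_e s then
        (let z = fresh (fv_e s \<union> fv_e e \<union> {x, y}) in TRef z b (subst_e x s (swap_e y z e)))
      else TRef y b (subst_e x s e))"
| "subst_t x s (TArr y t1 t2) =
     (if y = x then TArr y (subst_t x s t1) t2
      else if y \<in> fv_e s then
        (let z = fresh (fv_e s \<union> fv_t t2 \<union> {x, y}) in TArr z (subst_t x s t1) (subst_t x s (swap_t y z t2)))
      else TArr y (subst_t x s t1) (subst_t x s t2))"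
| "subst_t x s (TPEq t e1 e2) = TPEq (subst_t x s t) (subst_e x s e1) (subst_e x s e2)"
  by pat_completeness auto
termination
  by (relation "measure (\<lambda>a. case a of Inl (x, s, e) \<Rightarrow> sz_e e | Inr (x, s, t) \<Rightarrow> sz_t t)")
     (auto simp: sz_swap)

inductive step :: "expr \<Rightarrow> expr \<Rightarrow> bool" (infix "\<longmapsto>" 50) where
  ctx_app1: "e \<longmapsto> e' \<Longrightarrow> App e e2 \<longmapsto> App e' e2"
| ctx_app2: "is_value v \<Longrightarrow> e \<longmapsto> e' \<Longrightarrow> App v e \<longmapsto> App v e'"
| ctx_beq: "e \<longmapsto> e' \<Longrightarrow> BEq b e1 e2 e \<longmapsto> BEq b e1 e2 e'"
| ctx_xeq: "e \<longmapsto> e' \<Longrightarrow> XEq x t1 t2 e1 e2 e \<longmapsto> XEq x t1 t2 e1 e2 e'"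
| beta: "is_value v \<Longrightarrow> App (Lam x t e) v \<longmapsto> subst_e x v e"
| eq1: "App (Const (CEq b)) (Const c1) \<longmapsto> Const (CEq1 c1 b)"
| eq2: "App (Const (CEq1 c1 b)) (Const c2) \<longmapsto> (if c1 = c2 then Const CTrue else Const CFalse)"

abbreviation steps :: "expr \<Rightarrow> expr \<Rightarrow> bool" (infix "\<longmapsto>*" 50) where
  "e \<longmapsto>* e' \<equiv> step\<^sup>*\<^sup>* e e'"

fun const_btype :: "const \<Rightarrow> bty \<Rightarrow> bool" where
  "const_btype CTrue b = (b = TBool)"
| "const_btype CFalse b = (b = TBool)"
| "const_btype CUnit b = (b = TUnit)"
| "const_btype (CEq _) b = False"
| "const_btype (CEq1 _ _) b = False"

text \<open>A pending substitution: a list of bindings x |-> (v1, v2); extension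
  delta,(v1,v2)/x is consing, and the most recent binding of x takes precedence.\<close>
type_synonym psubst = "(var \<times> expr \<times> expr) list"

definition pending :: "psubst \<Rightarrow> bool" where
  "pending \<delta> \<longleftrightarrow> (\<forall>(x, v1, v2) \<in> set \<delta>.
      is_value v1 \<and> closed v1 \<and> is_value v2 \<and> closed v2)"

fun psubst1 :: "psubst \<Rightarrow> expr \<Rightarrow> expr" where
  "psubst1 [] e = e"
| "psubst1 ((x, v1, v2) # \<delta>) e = psubst1 \<delta> (subst_e x v1 e)"

fun psubst2 :: "psubst \<Rightarrow> expr \<Rightarrow> expr" where
  "psubst2 [] e = e"
| "psubst2 ((x, v1, v2) # \<delta>) e = psubst2 \<delta> (subst_e x v2 e)"

fun valrel :: "psubst \<Rightarrow> expr \<Rightarrow> expr \<Rightarrow> ty \<Rightarrow> bool" where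
  "valrel \<delta> v1 v2 (TRef x b r) =
     (\<exists>c. v1 = Const c \<and> v2 = Const c \<and> const_btype c b \<and>
          psubst1 \<delta> (subst_e x (Const c) r) \<longmapsto>* Const CTrue \<and>
          psubst2 \<delta> (subst_e x (Const c) r) \<longmapsto>* Const CTrue)"
| "valrel \<delta> v1 v2 (TArr x tx t) =
     (\<forall>v3 v4. is_value v3 \<and> closed v3 \<and> is_value v4 \<and> closed v4 \<and> valrel \<delta> v3 v4 tx \<longrightarrow>
        (\<exists>w1 w2. App v1 v3 \<longmapsto>* w1 \<and> is_value w1 \<and> App v2 v4 \<longmapsto>* w2 \<and> is_value w2 \<and>
                 valrel ((x, v3, v4) # \<delta>) w1 w2 t))"
| "valrel \<delta> v1 v2 (TPEq t el er) =
     (\<exists>w1 w2. psubst1 \<delta> el \<longmapsto>* w1 \<and> is_value w1 \<and> psubst2 \<delta> er \<longmapsto>* w2 \<and> is_value w2 \<and>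
              valrel \<delta> w1 w2 t)"

definition exprel :: "psubst \<Rightarrow> expr \<Rightarrow> expr \<Rightarrow> ty \<Rightarrow> bool" where
  "exprel \<delta> e1 e2 \<tau> \<longleftrightarrow>
     (\<exists>v1 v2. e1 \<longmapsto>* v1 \<and> is_value v1 \<and> e2 \<longmapsto>* v2 \<and> is_value v2 \<and> valrel \<delta> v1 v2 \<tau>)"

lemma valrel_PEq_exprel:
  "valrel \<delta> v1 v2 (TPEq t el er) = exprel \<delta> (psubst1 \<delta> el) (psubst2 \<delta> er) t"
  by (simp add: exprel_def)

lemma valrel_Arr_exprel:
  "valrel \<delta> v1 v2 (TArr x tx t) =
     (\<forall>v3 v4. is_value v3 \<and> closed v3 \<and> is_value v4 \<and> closed v4 \<and> valrel \<delta> v3 v4 tx \<longrightarrow>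
        exprel ((x, v3, v4) # \<delta>) (App v1 v3) (App v2 v4) t)"
  by (simp add: exprel_def)

end

theory Submission
  imports Defs
begin

text \<open>Reduction is deterministic and values are normal forms, so every reduct of an expression
  still reaches the value that the expression reaches. Hence the expression relation, which only
  asks that both sides evaluate to related values, is invariant under reduction in both directions.\<close>

lemma rtranclp_deterministic_to_normal_form:
  assumes deterministic: "\<And>x y z. r x y \<Longrightarrow> r x z \<Longrightarrow> y = z"
    and normal: "\<And>w. \<not> r z w"
    and "r\<^sup>*\<^sup>* x y" and "r\<^sup>*\<^sup>* x z"
  shows "r\<^sup>*\<^sup>* y z"
  using \<open>r\<^sup>*\<^sup>* x y\<close> \<open>r\<^sup>*\<^sup>* x z\<close>
proof (induction rule: converse_rtranclp_induct)
  case base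
  then show ?case .
next
  case (step x x')
  from \<open>r\<^sup>*\<^sup>* x z\<close> show ?case
  proof (cases rule: converse_rtranclpE)
    case base
    with \<open>r x x'\<close> normal show ?thesis by blast
  next
    case (step x'')
    with \<open>r x x'\<close> deterministic have "r\<^sup>*\<^sup>* x' z" by blast
    then show ?thesis by (rule step.IH)
  qed
qed

lemma value_no_step: "is_value v \<Longrightarrow> \<not> v \<longmapsto> e"
  by (induction v arbitrary: e rule: is_value.induct) (auto elim: step.cases)

lemma step_deterministic: "e \<longmapsto> e\<^sub>1 \<Longrightarrow> e \<longmapsto> e\<^sub>2 \<Longrightarrow> e\<^sub>1 = e\<^sub>2"
  by (induction e e\<^sub>1 arbitrary: e\<^sub>2 rule: step.induct)
    (blast elim: step.cases dest: value_no_step intro: is_value.intros)+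

lemma steps_to_value_from_reduct:
  "e \<longmapsto>* e' \<Longrightarrow> e \<longmapsto>* v \<Longrightarrow> is_value v \<Longrightarrow> e' \<longmapsto>* v"
  by (rule rtranclp_deterministic_to_normal_form[OF step_deterministic value_no_step])

lemma exprel_expand:
  "e\<^sub>1 \<longmapsto>* e\<^sub>1' \<Longrightarrow> e\<^sub>2 \<longmapsto>* e\<^sub>2' \<Longrightarrow> exprel \<delta> e\<^sub>1' e\<^sub>2' \<tau> \<Longrightarrow> exprel \<delta> e\<^sub>1 e\<^sub>2 \<tau>"
  unfolding exprel_def by (meson rtranclp_trans)

lemma exprel_reduce:
  "e\<^sub>1 \<longmapsto>* e\<^sub>1' \<Longrightarrow> e\<^sub>2 \<longmapsto>* e\<^sub>2' \<Longrightarrow> exprel \<delta> e\<^sub>1 e\<^sub>2 \<tau> \<Longrightarrow> exprel \<delta> e\<^sub>1' e\<^sub>2' \<tau>"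
  unfolding exprel_def by (meson steps_to_value_from_reduct)

theorem lemmaB19:
  assumes "pending \<delta>"
    and "e\<^sub>1 \<longmapsto>* e\<^sub>1'" and "e\<^sub>2 \<longmapsto>* e\<^sub>2'"
  shows "exprel \<delta> e\<^sub>1' e\<^sub>2' \<tau> \<longleftrightarrow> exprel \<delta> e\<^sub>1 e\<^sub>2 \<tau>"
  using assms(2,3) exprel_expand exprel_reduce by blast

end
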